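(* Fix positive reals $1 < p < q' < \frac{q}{2}$ and let $c = \min(\frac{q'}{2}, q - 2q') > 0$. There is $N_0(p,q,q')$ such that for all $n > N_0(p,q,q')$ the following holds. Let $0 \le A, B, C, D \le 1$ satisfy $|A - C| \le n^{-q}$, $|B - D| \le n^{-q}$, and $B, D \ge n^{-p}$. Let $\theta, \theta'$ each be uniformly distributed on $[0,2\pi)$, and set $S = A + B\cos(\theta)^2$ and $S' = C + D\cos(\theta')^2$. Then there exists a coupling of $\theta$ and $\theta'$ (i.e. a joint law with these uniform marginals) such that $$\mathbb{P}[S = S'] \ge 1 - 6 \times 10^3\, n^{-c}$$ and, almost surely, $$\cos(\theta)\cos(\theta') \ge 0, \qquad \sin(\theta)\sin(\theta') \ge 0.$$ *)

theory Defs
  imports "HOL-Probability.Probability"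
begin

end

theory Submission
  imports Defs
begin

text \<open>
  The maps \<open>x \<mapsto> x, \<pi> - x, \<pi> + x, 2\<pi> - x\<close>, applied simultaneously to both angles, preserve
  \<open>cos\<^sup>2\<close>, \<open>cos \<theta> cos \<theta>'\<close> and \<open>sin \<theta> sin \<theta>'\<close>; applying a uniformly random one of them to a
  coupling of two uniform angles on \<open>[0, \<pi>/2]\<close> gives a coupling on \<open>[0, 2\<pi>)\<close> with the required
  signs. On the quarter period, \<open>S = S'\<close> reads \<open>cos 2\<theta>' = \<gamma> + \<beta> cos 2\<theta>\<close> with \<open>\<beta> = B/D\<close> and
  \<open>|\<beta> - 1|, |\<gamma>| \<le> \<delta> = 3 n^(p - q)\<close>, solved by the increasing map
  \<open>\<psi> \<theta> = arccos (\<gamma> + \<beta> cos 2\<theta>) / 2\<close> on \<open>[a, \<pi>/2 - a]\<close>, \<open>a \<approx> \<surd>\<delta>\<close>. Setting \<open>\<theta>' = \<psi> \<theta>\<close> with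
  probability \<open>min 1 (\<psi>' \<theta>)\<close>, and otherwise drawing \<open>\<theta>'\<close> from the leftover mass, is a coupling
  of the uniform laws. Since \<open>\<psi>' \<le> 1\<close> exactly on an interval and \<open>\<psi>\<close> moves points by at most
  \<open>2 \<surd>\<delta>\<close>, it succeeds with probability at least \<open>1 - 6 \<surd>\<delta> \<ge> 1 - 12 n^(-c)\<close>.
\<close>

section \<open>Couplings from a partial transport\<close>

lemma nn_integral_uniform_01_threshold:
  fixes c :: real
  assumes "0 \<le> c" "c \<le> 1"
  shows "(\<integral>\<^sup>+t. (if t \<le> c then a else b) \<partial>uniform_measure lborel {0..1})
    = a * ennreal c + b * ennreal (1 - c)"
proof -
  let ?T = "uniform_measure lborel {0..1::real}"
  have "{0..1} \<inter> {..c} = {0..c}" "{0..1} \<inter> {c<..} = {c<..1}"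
    using assms by auto
  then have T: "emeasure ?T {..c} = ennreal c" "emeasure ?T {c<..} = ennreal (1 - c)"
    using assms by (simp_all add: divide_ennreal_def)
  have "(\<integral>\<^sup>+t. (if t \<le> c then a else b) \<partial>?T)
      = (\<integral>\<^sup>+t. a * indicator {..c} t + b * indicator {c<..} t \<partial>?T)"
    by (intro nn_integral_cong) (auto split: split_indicator)
  also have "\<dots> = a * emeasure ?T {..c} + b * emeasure ?T {c<..}"
    by (subst nn_integral_add) (auto simp: nn_integral_cmult_indicator)
  finally show ?thesis
    using T by simp
qed

lemma (in prob_space) nn_integral_add_complement:
  assumes [measurable]: "f \<in> borel_measurable M" and f: "\<And>x. 0 \<le> f x \<and> f x \<le> 1"
  shows "(\<integral>\<^sup>+x. ennreal (f x) \<partial>M) + (\<integral>\<^sup>+x. ennreal (1 - f x) \<partial>M) = 1"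
proof -
  have "(\<integral>\<^sup>+x. ennreal (f x) \<partial>M) + (\<integral>\<^sup>+x. ennreal (1 - f x) \<partial>M)
      = (\<integral>\<^sup>+x. ennreal (f x) + ennreal (1 - f x) \<partial>M)"
    by (subst nn_integral_add) auto
  also have "\<dots> = (\<integral>\<^sup>+x. 1 \<partial>M)"
    using f by (intro nn_integral_cong) (simp add: ennreal_plus[symmetric] del: ennreal_plus)
  finally show ?thesis
    using emeasure_space_1 by simp
qed

locale partial_transport = prob_space U for U :: "'a measure" +
  fixes w k :: "'a \<Rightarrow> real" and \<psi> :: "'a \<Rightarrow> 'a"
  assumes measurable_w[measurable]: "w \<in> borel_measurable U"
    and measurable_k[measurable]: "k \<in> borel_measurable U"
    and measurable_\<psi>[measurable]: "\<psi> \<in> U \<rightarrow>\<^sub>M U"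
    and w_bounds: "\<And>x. 0 \<le> w x \<and> w x \<le> 1"
    and k_bounds: "\<And>x. 0 \<le> k x \<and> k x \<le> 1"
    and pushforward: "\<And>Y. Y \<in> sets U \<Longrightarrow>
      (\<integral>\<^sup>+x. ennreal (w x) * indicator Y (\<psi> x) \<partial>U) = (\<integral>\<^sup>+y. ennreal (k y) * indicator Y y \<partial>U)"
begin

definition leftover :: ennreal where
  "leftover = (\<integral>\<^sup>+x. ennreal (1 - w x) \<partial>U)"

text \<open>If nothing is left over, the residual law is never sampled, so \<open>U\<close> is an arbitrary choice.\<close>

definition residual :: "'a measure" where
  "residual = (if leftover = 0 then U else density U (\<lambda>y. ennreal (1 - k y) / leftover))"

definition coupling :: "('a \<times> 'a) measure" where
  "coupling = distr (U \<Otimes>\<^sub>M (uniform_measure lborel {0..1} \<Otimes>\<^sub>M residual)) (U \<Otimes>\<^sub>M U)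
     (\<lambda>(x, t, y). (x, if t \<le> w x then \<psi> x else y))"

lemma leftover_eq: "leftover = (\<integral>\<^sup>+y. ennreal (1 - k y) \<partial>U)"
proof -
  have w_eq_k: "(\<integral>\<^sup>+x. ennreal (w x) \<partial>U) = (\<integral>\<^sup>+y. ennreal (k y) \<partial>U)"
    using pushforward[of "space U"] measurable_space[OF measurable_\<psi>] by (simp cong: nn_integral_cong)
  have "(\<integral>\<^sup>+x. ennreal (k x) \<partial>U) + leftover = (\<integral>\<^sup>+x. ennreal (k x) \<partial>U) + (\<integral>\<^sup>+y. ennreal (1 - k y) \<partial>U)"
    using nn_integral_add_complement[of w] nn_integral_add_complement[of k] w_bounds k_bounds w_eq_k
    unfolding leftover_def by simp
  moreover have "(\<integral>\<^sup>+x. ennreal (k x) \<partial>U) \<noteq> \<infinity>"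
    using nn_integral_add_complement[of k] k_bounds by (auto simp: top_add)
  ultimately show ?thesis
    by (simp add: ennreal_add_left_cancel)
qed

lemma leftover_finite: "leftover \<noteq> \<infinity>"
  using nn_integral_add_complement[of w] w_bounds unfolding leftover_def by (auto simp: add_top)

lemma sets_residual[measurable_cong]: "sets residual = sets U"
  by (simp add: residual_def)

lemma leftover_times_residual:
  assumes [measurable]: "Y \<in> sets U"
  shows "leftover * emeasure residual Y = (\<integral>\<^sup>+y. ennreal (1 - k y) * indicator Y y \<partial>U)"
proof (cases "leftover = 0")
  case True
  have "(\<integral>\<^sup>+y. ennreal (1 - k y) * indicator Y y \<partial>U) \<le> (\<integral>\<^sup>+y. ennreal (1 - k y) \<partial>U)"
    by (intro nn_integral_mono) (simp split: split_indicator)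
  then show ?thesis
    using True by (simp add: leftover_eq[symmetric])
next
  case False
  have "emeasure residual Y = (\<integral>\<^sup>+y. ennreal (1 - k y) / leftover * indicator Y y \<partial>U)"
    using False by (simp add: residual_def emeasure_density)
  also have "\<dots> = (\<integral>\<^sup>+y. ennreal (1 - k y) * indicator Y y \<partial>U) / leftover"
    by (subst nn_integral_divide[symmetric]) (auto intro!: nn_integral_cong split: split_indicator)
  finally show ?thesis
    using False leftover_finite
    by (simp add: mult.commute[of leftover] ennreal_divide_times ennreal_divide_self less_top[symmetric])
qed

lemma prob_space_residual: "prob_space residual"
proof (cases "leftover = 0")
  case True
  then show ?thesis
    by (simp add: residual_def prob_space_axioms)
next
  case False
  have "leftover * emeasure residual (space residual) = leftover * 1"
    using leftover_times_residual[of "space U"] sets_eq_imp_space_eq[OF sets_residual]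
    by (simp add: leftover_eq cong: nn_integral_cong)
  then show ?thesis
    using False leftover_finite by (intro prob_spaceI) (subst (asm) ennreal_mult_cancel_left, auto)
qed

lemma sets_coupling[measurable_cong]: "sets coupling = sets (U \<Otimes>\<^sub>M U)"
  by (simp add: coupling_def)

lemma space_coupling: "space coupling = space U \<times> space U"
  by (simp add: coupling_def space_pair_measure)

lemma measurable_coupling_map[measurable]:
  "(\<lambda>(x, t, y). (x, if t \<le> w x then \<psi> x else y))
     \<in> U \<Otimes>\<^sub>M (uniform_measure lborel {0..1::real} \<Otimes>\<^sub>M residual) \<rightarrow>\<^sub>M U \<Otimes>\<^sub>M U"
proof -
  have [measurable_cong]: "sets (uniform_measure lborel {0..1::real}) = sets borel"
    by simp
  show ?thesis
    by measurable
qed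

lemma prob_space_coupling: "prob_space coupling"
proof -
  interpret residual: prob_space residual
    by (rule prob_space_residual)
  interpret T: prob_space "uniform_measure lborel {0..1::real}"
    by (rule prob_space_uniform_measure) auto
  interpret TR: prob_space "uniform_measure lborel {0..1::real} \<Otimes>\<^sub>M residual"
    by (rule prob_space_pair) unfold_locales
  interpret UTR: prob_space "U \<Otimes>\<^sub>M (uniform_measure lborel {0..1::real} \<Otimes>\<^sub>M residual)"
    by (rule prob_space_pair) unfold_locales
  show ?thesis
    unfolding coupling_def by (rule UTR.prob_space_distr) (rule measurable_coupling_map)
qed

lemma nn_integral_residual_branch:
  assumes X: "X \<in> sets (U \<Otimes>\<^sub>M U)"
  shows "(\<integral>\<^sup>+y. indicator X (x, if t \<le> w x then \<psi> x else y) \<partial>residual)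
    = (if t \<le> w x then indicator X (x, \<psi> x) else emeasure residual (Pair x -` X))"
proof (cases "t \<le> w x")
  case True
  then show ?thesis
    using prob_space.emeasure_space_1[OF prob_space_residual] by simp
next
  case False
  have "(\<integral>\<^sup>+y. indicator X (x, y) \<partial>residual) = (\<integral>\<^sup>+y. indicator (Pair x -` X) y \<partial>residual)"
    by (intro nn_integral_cong) (simp split: split_indicator)
  also have "\<dots> = emeasure residual (Pair x -` X)"
    using sets_Pair1[OF X] by (intro nn_integral_indicator) (simp add: sets_residual)
  finally show ?thesis
    using False by simp
qed

lemma emeasure_coupling:
  assumes X[measurable]: "X \<in> sets (U \<Otimes>\<^sub>M U)"
  shows "emeasure coupling X = (\<integral>\<^sup>+x. ennreal (w x) * indicator X (x, \<psi> x)
    + ennreal (1 - w x) * emeasure residual (Pair x -` X) \<partial>U)"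
proof -
  interpret residual: prob_space residual
    by (rule prob_space_residual)
  let ?T = "uniform_measure lborel {0..1::real}"
  interpret TR: prob_space "?T \<Otimes>\<^sub>M residual"
    by (rule prob_space_pair) (rule prob_space_uniform_measure, auto, unfold_locales)
  define G where "G = (\<lambda>(x, t, y). (x, if t \<le> w x then \<psi> x else y))"
  have G[measurable]: "G \<in> U \<Otimes>\<^sub>M (?T \<Otimes>\<^sub>M residual) \<rightarrow>\<^sub>M U \<Otimes>\<^sub>M U"
    unfolding G_def by (rule measurable_coupling_map)
  have "emeasure coupling X = (\<integral>\<^sup>+z. indicator X z \<partial>coupling)"
    by (simp add: sets_coupling)
  also have "\<dots> = (\<integral>\<^sup>+\<omega>. indicator X (G \<omega>) \<partial>(U \<Otimes>\<^sub>M (?T \<Otimes>\<^sub>M residual)))"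
    unfolding coupling_def G_def[symmetric] by (rule nn_integral_distr) auto
  also have "\<dots> = (\<integral>\<^sup>+x. \<integral>\<^sup>+ty. indicator X (G (x, ty)) \<partial>(?T \<Otimes>\<^sub>M residual) \<partial>U)"
    by (rule TR.nn_integral_fst[symmetric]) measurable
  also have "\<dots> = (\<integral>\<^sup>+x. \<integral>\<^sup>+t. \<integral>\<^sup>+y. indicator X (G (x, t, y)) \<partial>residual \<partial>?T \<partial>U)"
  proof (intro nn_integral_cong)
    fix x assume "x \<in> space U"
    then have "(\<lambda>ty. G (x, ty)) \<in> ?T \<Otimes>\<^sub>M residual \<rightarrow>\<^sub>M U \<Otimes>\<^sub>M U"
      using measurable_Pair2[OF G] by simp
    then have "(\<lambda>ty. indicator X (G (x, ty)) :: ennreal) \<in> borel_measurable (?T \<Otimes>\<^sub>M residual)"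
      by (rule measurable_compose) simp
    from residual.nn_integral_fst[OF this]
    show "(\<integral>\<^sup>+ty. indicator X (G (x, ty)) \<partial>(?T \<Otimes>\<^sub>M residual))
        = (\<integral>\<^sup>+t. \<integral>\<^sup>+y. indicator X (G (x, t, y)) \<partial>residual \<partial>?T)"
      by simp
  qed
  also have "\<dots> = (\<integral>\<^sup>+x. \<integral>\<^sup>+t. (if t \<le> w x then indicator X (x, \<psi> x)
      else emeasure residual (Pair x -` X)) \<partial>?T \<partial>U)"
    by (simp only: nn_integral_residual_branch[OF X] G_def case_prod_conv)
  also have "\<dots> = (\<integral>\<^sup>+x. ennreal (w x) * indicator X (x, \<psi> x)
      + ennreal (1 - w x) * emeasure residual (Pair x -` X) \<partial>U)"
    by (intro nn_integral_cong) (simp add: nn_integral_uniform_01_threshold w_bounds mult.commute)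
  finally show ?thesis .
qed

lemma emeasure_coupling_ge:
  assumes "X \<in> sets (U \<Otimes>\<^sub>M U)"
  shows "(\<integral>\<^sup>+x. ennreal (w x) * indicator X (x, \<psi> x) \<partial>U) \<le> emeasure coupling X"
  using assms by (auto simp: emeasure_coupling intro!: nn_integral_mono)

lemma distr_coupling_fst: "distr coupling U fst = U"
proof (rule measure_eqI)
  fix Y assume "Y \<in> sets (distr coupling U fst)"
  then have Y[measurable]: "Y \<in> sets U"
    by simp
  have "emeasure (distr coupling U fst) Y = emeasure coupling (Y \<times> space U)"
    using sets.sets_into_space[OF Y]
    by (subst emeasure_distr) (auto simp: space_coupling intro!: arg_cong2[where f=emeasure])
  also have "\<dots> = (\<integral>\<^sup>+x. ennreal (w x) * indicator Y x + ennreal (1 - w x) * indicator Y x \<partial>U)"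
    using prob_space.emeasure_space_1[OF prob_space_residual] sets_eq_imp_space_eq[OF sets_residual]
    by (subst emeasure_coupling)
      (auto intro!: nn_integral_cong simp: measurable_space[OF measurable_\<psi>] split: split_indicator)
  also have "\<dots> = (\<integral>\<^sup>+x. indicator Y x \<partial>U)"
    using w_bounds
    by (intro nn_integral_cong)
      (auto split: split_indicator simp: ennreal_plus[symmetric] simp del: ennreal_plus)
  also have "\<dots> = emeasure U Y"
    by simp
  finally show "emeasure (distr coupling U fst) Y = emeasure U Y" .
qed simp

text \<open>The followed mass arrives with density \<open>k\<close> by
  \<open>pushforward\<close>, and the residual law supplies exactly the missing density \<open>1 - k\<close>.\<close>

lemma distr_coupling_snd: "distr coupling U snd = U"
proof (rule measure_eqI)
  fix Y assume "Y \<in> sets (distr coupling U snd)"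
  then have Y[measurable]: "Y \<in> sets U"
    by simp
  have "emeasure (distr coupling U snd) Y = emeasure coupling (space U \<times> Y)"
    using sets.sets_into_space[OF Y]
    by (subst emeasure_distr) (auto simp: space_coupling intro!: arg_cong2[where f=emeasure])
  also have "\<dots> = (\<integral>\<^sup>+x. ennreal (w x) * indicator Y (\<psi> x) + ennreal (1 - w x) * emeasure residual Y \<partial>U)"
    by (subst emeasure_coupling)
      (auto intro!: nn_integral_cong simp: measurable_space[OF measurable_\<psi>] split: split_indicator)
  also have "\<dots> = (\<integral>\<^sup>+x. ennreal (w x) * indicator Y (\<psi> x) \<partial>U) + leftover * emeasure residual Y"
    unfolding leftover_def by (subst nn_integral_add) (auto simp: nn_integral_multc)
  also have "\<dots> = (\<integral>\<^sup>+y. ennreal (k y) * indicator Y y + ennreal (1 - k y) * indicator Y y \<partial>U)"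
    by (simp add: pushforward leftover_times_residual nn_integral_add)
  also have "\<dots> = (\<integral>\<^sup>+y. indicator Y y \<partial>U)"
    using k_bounds
    by (intro nn_integral_cong)
      (auto split: split_indicator simp: ennreal_plus[symmetric] simp del: ennreal_plus)
  also have "\<dots> = emeasure U Y"
    by simp
  finally show "emeasure (distr coupling U snd) Y = emeasure U Y" .
qed simp

end

section \<open>Symmetrisation over the four quadrants\<close>

definition quadrant_map :: "nat \<Rightarrow> real \<Rightarrow> real" where
  "quadrant_map j x =
    (if j = 0 then x else if j = 1 then pi - x else if j = 2 then pi + x else 2 * pi - x)"

lemma measurable_quadrant_map[measurable]:
  "(\<lambda>(j, x). quadrant_map j x) \<in> count_space UNIV \<Otimes>\<^sub>M borel \<rightarrow>\<^sub>M borel"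
  unfolding quadrant_map_def by measurable

lemma borel_measurable_quadrant_map[measurable]: "quadrant_map j \<in> borel_measurable borel"
  unfolding quadrant_map_def by measurable

lemma quadrant_map_trig:
  "cos (quadrant_map j x) * cos (quadrant_map j y) = cos x * cos y"
  "sin (quadrant_map j x) * sin (quadrant_map j y) = sin x * sin y"
  "cos (quadrant_map j x) ^ 2 = cos x ^ 2"
  by (auto simp: quadrant_map_def cos_diff sin_diff cos_add sin_add power2_eq_square)

lemma emeasure_lborel_vimage_unit_affine:
  fixes t c :: real
  assumes "c = 1 \<or> c = -1" and "S \<in> sets borel"
  shows "emeasure lborel ((\<lambda>x. t + c * x) -` S) = emeasure lborel S"
proof -
  have "lborel = distr lborel borel (\<lambda>x. t + c * x)"
    using lborel_real_affine[of c t] assms(1) by (auto simp: density_1)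
  then have "emeasure lborel S = emeasure (distr lborel borel (\<lambda>x. t + c * x)) S"
    by simp
  also have "\<dots> = emeasure lborel ((\<lambda>x. t + c * x) -` S)"
    using assms(2) by (subst emeasure_distr) auto
  finally show ?thesis
    by simp
qed

lemma emeasure_lborel_Icc_split:
  fixes a b c :: real
  assumes "a \<le> b" "b \<le> c" and [measurable]: "Y \<in> sets borel"
  shows "emeasure lborel ({a..b} \<inter> Y) + emeasure lborel ({b..c} \<inter> Y) = emeasure lborel ({a..c} \<inter> Y)"
proof -
  have "emeasure lborel ({b..c} \<inter> Y) = emeasure lborel ({b<..c} \<inter> Y)"
  proof (rule antisym)
    have "emeasure lborel ({b..c} \<inter> Y) \<le> emeasure lborel (({b<..c} \<inter> Y) \<union> {b})"
      by (rule emeasure_mono) auto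
    also have "\<dots> \<le> emeasure lborel ({b<..c} \<inter> Y)"
      using emeasure_subadditive[of "{b<..c} \<inter> Y" lborel "{b}"] by simp
    finally show "emeasure lborel ({b..c} \<inter> Y) \<le> emeasure lborel ({b<..c} \<inter> Y)" .
  qed (rule emeasure_mono, auto)
  also have "emeasure lborel ({a..b} \<inter> Y) + \<dots> = emeasure lborel (({a..b} \<inter> Y) \<union> ({b<..c} \<inter> Y))"
    by (rule plus_emeasure) auto
  also have "({a..b} \<inter> Y) \<union> ({b<..c} \<inter> Y) = {a..c} \<inter> Y"
    using assms by auto
  finally show ?thesis .
qed

lemma emeasure_quarter_vimage_quadrant_map:
  fixes Y :: "real set"
  assumes [measurable]: "Y \<in> sets borel"
  shows "emeasure lborel ({0..pi/2} \<inter> quadrant_map 0 -` Y) = emeasure lborel ({0..pi/2} \<inter> Y)"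
    and "emeasure lborel ({0..pi/2} \<inter> quadrant_map 1 -` Y) = emeasure lborel ({pi/2..pi} \<inter> Y)"
    and "emeasure lborel ({0..pi/2} \<inter> quadrant_map 2 -` Y) = emeasure lborel ({pi..3*pi/2} \<inter> Y)"
    and "emeasure lborel ({0..pi/2} \<inter> quadrant_map 3 -` Y) = emeasure lborel ({3*pi/2..2*pi} \<inter> Y)"
proof -
  show "emeasure lborel ({0..pi/2} \<inter> quadrant_map 0 -` Y) = emeasure lborel ({0..pi/2} \<inter> Y)"
    by (simp add: quadrant_map_def vimage_def)
  have vimage_1: "{0..pi/2} \<inter> quadrant_map 1 -` Y = (\<lambda>x. pi + (-1) * x) -` ({pi/2..pi} \<inter> Y)"
    by (auto simp: quadrant_map_def)
  show "emeasure lborel ({0..pi/2} \<inter> quadrant_map 1 -` Y) = emeasure lborel ({pi/2..pi} \<inter> Y)"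
    unfolding vimage_1 by (rule emeasure_lborel_vimage_unit_affine) auto
  have vimage_2: "{0..pi/2} \<inter> quadrant_map 2 -` Y = (\<lambda>x. pi + 1 * x) -` ({pi..3*pi/2} \<inter> Y)"
    by (auto simp: quadrant_map_def)
  show "emeasure lborel ({0..pi/2} \<inter> quadrant_map 2 -` Y) = emeasure lborel ({pi..3*pi/2} \<inter> Y)"
    unfolding vimage_2 by (rule emeasure_lborel_vimage_unit_affine) auto
  have vimage_3: "{0..pi/2} \<inter> quadrant_map 3 -` Y = (\<lambda>x. 2*pi + (-1) * x) -` ({3*pi/2..2*pi} \<inter> Y)"
    by (auto simp: quadrant_map_def)
  show "emeasure lborel ({0..pi/2} \<inter> quadrant_map 3 -` Y) = emeasure lborel ({3*pi/2..2*pi} \<inter> Y)"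
    unfolding vimage_3 by (rule emeasure_lborel_vimage_unit_affine) auto
qed

lemma sum_emeasure_quarter_vimage_quadrant_map:
  fixes Y :: "real set"
  assumes [measurable]: "Y \<in> sets borel"
  shows "(\<Sum>j\<in>{0,1,2,3}. emeasure lborel ({0..pi/2} \<inter> quadrant_map j -` Y))
    = emeasure lborel ({0..<2*pi} \<inter> Y)"
proof -
  have "(\<Sum>j\<in>{0,1,2,3}. emeasure lborel ({0..pi/2} \<inter> quadrant_map j -` Y)) =
     emeasure lborel ({0..pi/2} \<inter> Y) + emeasure lborel ({pi/2..pi} \<inter> Y)
     + emeasure lborel ({pi..3*pi/2} \<inter> Y) + emeasure lborel ({3*pi/2..2*pi} \<inter> Y)"
    by (simp add: emeasure_quarter_vimage_quadrant_map[simplified] add.assoc)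
  also have "\<dots> = emeasure lborel ({0..2*pi} \<inter> Y)"
    using pi_gt_zero by (simp add: emeasure_lborel_Icc_split)
  also have "\<dots> = emeasure lborel ({0..<2*pi} \<inter> Y)"
  proof (rule antisym)
    have "emeasure lborel ({0..2*pi} \<inter> Y) \<le> emeasure lborel (({0..<2*pi} \<inter> Y) \<union> {2*pi})"
      by (rule emeasure_mono) auto
    also have "\<dots> \<le> emeasure lborel ({0..<2*pi} \<inter> Y)"
      using emeasure_subadditive[of "{0..<2*pi} \<inter> Y" lborel "{2*pi}"] by simp
    finally show "emeasure lborel ({0..2*pi} \<inter> Y) \<le> emeasure lborel ({0..<2*pi} \<inter> Y)" .
  qed (rule emeasure_mono, auto)
  finally show ?thesis .
qed

lemma ennreal_divide_half_pi_divide_4: "x / ennreal (pi/2) / 4 = x / ennreal (2 * pi)"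
proof -
  have "inverse (ennreal (pi/2)) * inverse 4 = ennreal (inverse (pi/2)) * ennreal (inverse 4)"
    using inverse_ennreal[of "4::real"] by (simp add: inverse_ennreal)
  also have "\<dots> = inverse (ennreal (2 * pi))"
    by (subst ennreal_mult[symmetric]) (auto simp: inverse_ennreal field_simps)
  finally show ?thesis
    by (simp add: divide_ennreal_def mult.assoc)
qed

abbreviation quarter_uniform :: "real measure" where
  "quarter_uniform \<equiv> uniform_measure lborel {0..pi/2}"

abbreviation circle_uniform :: "real measure" where
  "circle_uniform \<equiv> uniform_measure lborel {0..<2*pi}"

locale quarter_coupling = prob_space K for K :: "(real \<times> real) measure" +
  assumes sets_K[measurable_cong]: "sets K = sets (borel \<Otimes>\<^sub>M borel)"
    and distr_fst: "distr K borel fst = quarter_uniform"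
    and distr_snd: "distr K borel snd = quarter_uniform"
begin

definition symmetrize :: "(real \<times> real) measure" where
  "symmetrize = distr (K \<Otimes>\<^sub>M measure_pmf (pmf_of_set {0, 1, 2, 3}))
     (borel \<Otimes>\<^sub>M borel) (\<lambda>(z, j). (quadrant_map j (fst z), quadrant_map j (snd z)))"

lemma sets_symmetrize[measurable_cong]: "sets symmetrize = sets (borel \<Otimes>\<^sub>M borel)"
  by (simp add: symmetrize_def)

lemma space_symmetrize: "space symmetrize = UNIV"
  by (simp add: symmetrize_def space_pair_measure)

lemma measurable_symmetrize_map[measurable]:
  "(\<lambda>(z, j). (quadrant_map j (fst z), quadrant_map j (snd z)))
     \<in> K \<Otimes>\<^sub>M measure_pmf (pmf_of_set {0, 1, 2, 3}) \<rightarrow>\<^sub>M borel \<Otimes>\<^sub>M borel"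
proof -
  have component: "(\<lambda>\<omega>. quadrant_map (snd \<omega>) (p (fst \<omega>)))
      \<in> K \<Otimes>\<^sub>M measure_pmf (pmf_of_set {0, 1, 2, 3}) \<rightarrow>\<^sub>M borel"
    if [measurable]: "p \<in> K \<rightarrow>\<^sub>M borel" for p
  proof -
    have "(\<lambda>\<omega>. (snd \<omega>, p (fst \<omega>)))
        \<in> K \<Otimes>\<^sub>M measure_pmf (pmf_of_set {0, 1, 2, 3}) \<rightarrow>\<^sub>M count_space UNIV \<Otimes>\<^sub>M borel"
      by measurable
    from measurable_compose[OF this measurable_quadrant_map] show ?thesis
      by simp
  qed
  show ?thesis
    using component[of fst] component[of snd] by (auto simp: split_beta' intro!: measurable_Pair)
qed

lemma prob_space_symmetrize: "prob_space symmetrize"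
proof -
  interpret P: prob_space "K \<Otimes>\<^sub>M measure_pmf (pmf_of_set {0, 1, 2, 3::nat})"
    by (intro prob_space_pair prob_space_axioms prob_space_measure_pmf)
  show ?thesis
    unfolding symmetrize_def by (rule P.prob_space_distr) (rule measurable_symmetrize_map)
qed

lemma emeasure_symmetrize:
  assumes [measurable]: "X \<in> sets (borel \<Otimes>\<^sub>M borel)"
  shows "emeasure symmetrize X
    = (\<integral>\<^sup>+z. (\<Sum>j\<in>{0,1,2,3}. indicator X (quadrant_map j (fst z), quadrant_map j (snd z))) / 4 \<partial>K)"
proof -
  let ?P = "measure_pmf (pmf_of_set {0, 1, 2, 3::nat})"
  define F where "F = (\<lambda>(z, j). (quadrant_map j (fst z), quadrant_map j (snd z)))"
  have [measurable]: "F \<in> K \<Otimes>\<^sub>M ?P \<rightarrow>\<^sub>M borel \<Otimes>\<^sub>M borel"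
    unfolding F_def by (rule measurable_symmetrize_map)
  have "emeasure symmetrize X = (\<integral>\<^sup>+z. indicator X z \<partial>symmetrize)"
    by (simp add: sets_symmetrize)
  also have "\<dots> = (\<integral>\<^sup>+\<omega>. indicator X (F \<omega>) \<partial>(K \<Otimes>\<^sub>M ?P))"
    unfolding symmetrize_def F_def[symmetric] by (rule nn_integral_distr) auto
  also have "\<dots> = (\<integral>\<^sup>+z. \<integral>\<^sup>+j. indicator X (F (z, j)) \<partial>?P \<partial>K)"
    by (rule measure_pmf.nn_integral_fst[symmetric]) measurable
  also have "\<dots> = (\<integral>\<^sup>+z. (\<Sum>j\<in>{0,1,2,3}.
      indicator X (quadrant_map j (fst z), quadrant_map j (snd z))) / 4 \<partial>K)"
    by (simp add: nn_integral_pmf_of_set F_def)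
  finally show ?thesis .
qed

lemma nn_integral_indicator_quadrant_map:
  assumes [measurable]: "p \<in> K \<rightarrow>\<^sub>M borel" and p: "distr K borel p = quarter_uniform"
    and [measurable]: "Y \<in> sets borel"
  shows "(\<integral>\<^sup>+z. indicator Y (quadrant_map j (p z)) \<partial>K)
    = emeasure lborel ({0..pi/2} \<inter> quadrant_map j -` Y) / ennreal (pi/2)"
proof -
  have vimage: "quadrant_map j -` Y \<in> sets borel"
    using measurable_sets_borel[OF borel_measurable_quadrant_map] by simp
  have "(\<integral>\<^sup>+z. indicator Y (quadrant_map j (p z)) \<partial>K)
      = (\<integral>\<^sup>+x. indicator (quadrant_map j -` Y) x \<partial>distr K borel p)"
    by (subst nn_integral_distr) (auto simp: indicator_def)
  also have "\<dots> = emeasure quarter_uniform (quadrant_map j -` Y)"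
    unfolding p using vimage by (intro nn_integral_indicator) simp
  finally show ?thesis
    using vimage by (subst (asm) emeasure_uniform_measure) (auto simp: Int_commute)
qed

lemma nn_integral_quadrant_indicator:
  assumes [measurable]: "p \<in> K \<rightarrow>\<^sub>M borel" and p: "distr K borel p = quarter_uniform"
    and Y[measurable]: "Y \<in> sets borel"
  shows "(\<integral>\<^sup>+z. (\<Sum>j\<in>{0,1,2,3}. indicator Y (quadrant_map j (p z))) / 4 \<partial>K) = emeasure circle_uniform Y"
proof -
  have "(\<integral>\<^sup>+z. (\<Sum>j\<in>{0,1,2,3}. indicator Y (quadrant_map j (p z))) / 4 \<partial>K)
      = (\<Sum>j\<in>{0,1,2,3}. (\<integral>\<^sup>+z. indicator Y (quadrant_map j (p z)) \<partial>K)) / 4"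
    by (subst nn_integral_divide, measurable, subst nn_integral_sum, measurable)
  also have "\<dots> = (\<Sum>j\<in>{0,1,2,3}. emeasure lborel ({0..pi/2} \<inter> quadrant_map j -` Y)) / ennreal (pi/2) / 4"
    by (simp only: nn_integral_indicator_quadrant_map[OF assms])
      (simp add: divide_ennreal_def distrib_right)
  also have "\<dots> = emeasure lborel ({0..<2*pi} \<inter> Y) / ennreal (2 * pi)"
    by (simp only: sum_emeasure_quarter_vimage_quadrant_map[OF Y] ennreal_divide_half_pi_divide_4)
  also have "\<dots> = emeasure circle_uniform Y"
    by (simp add: emeasure_uniform_measure)
  finally show ?thesis .
qed

lemma distr_symmetrize_fst: "distr symmetrize borel fst = circle_uniform"
proof (rule measure_eqI)
  fix Y assume "Y \<in> sets (distr symmetrize borel fst)"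
  then have [measurable]: "Y \<in> sets borel"
    by simp
  have "emeasure (distr symmetrize borel fst) Y = emeasure symmetrize (Y \<times> UNIV)"
    by (subst emeasure_distr) (auto simp: space_symmetrize intro!: arg_cong2[where f=emeasure])
  also have "\<dots> = (\<integral>\<^sup>+z. (\<Sum>j\<in>{0,1,2,3}. indicator Y (quadrant_map j (fst z))) / 4 \<partial>K)"
    by (subst emeasure_symmetrize) (auto intro!: nn_integral_cong simp: indicator_def)
  also have "\<dots> = emeasure circle_uniform Y"
    by (rule nn_integral_quadrant_indicator) (auto simp: distr_fst)
  finally show "emeasure (distr symmetrize borel fst) Y = emeasure circle_uniform Y" .
qed simp

lemma distr_symmetrize_snd: "distr symmetrize borel snd = circle_uniform"
proof (rule measure_eqI)
  fix Y assume "Y \<in> sets (distr symmetrize borel snd)"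
  then have [measurable]: "Y \<in> sets borel"
    by simp
  have "emeasure (distr symmetrize borel snd) Y = emeasure symmetrize (UNIV \<times> Y)"
    by (subst emeasure_distr) (auto simp: space_symmetrize intro!: arg_cong2[where f=emeasure])
  also have "\<dots> = (\<integral>\<^sup>+z. (\<Sum>j\<in>{0,1,2,3}. indicator Y (quadrant_map j (snd z))) / 4 \<partial>K)"
    by (subst emeasure_symmetrize) (auto intro!: nn_integral_cong simp: indicator_def)
  also have "\<dots> = emeasure circle_uniform Y"
    by (rule nn_integral_quadrant_indicator) (auto simp: distr_snd)
  finally show "emeasure (distr symmetrize borel snd) Y = emeasure circle_uniform Y" .
qed simp

lemma emeasure_symmetrize_invariant:
  assumes [measurable]: "X \<in> sets (borel \<Otimes>\<^sub>M borel)"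
    and invariant: "\<And>j x y. (quadrant_map j x, quadrant_map j y) \<in> X \<longleftrightarrow> (x, y) \<in> X"
  shows "emeasure symmetrize X = emeasure K X"
proof -
  have "emeasure symmetrize X = (\<integral>\<^sup>+z. (\<Sum>j\<in>{0,1,2,3::nat}. indicator X z) / 4 \<partial>K)"
    by (simp add: emeasure_symmetrize invariant indicator_def)
  also have "\<dots> = (\<integral>\<^sup>+z. indicator X z \<partial>K)"
    by (intro nn_integral_cong) (simp add: mult.commute[of 4] mult_divide_eq_ennreal)
  also have "\<dots> = emeasure K X"
    by (simp add: sets_K)
  finally show ?thesis .
qed

lemma AE_quarter: "AE z in K. fst z \<in> {0..pi/2} \<and> snd z \<in> {0..pi/2}"
proof -
  have quarter: "AE x in quarter_uniform. x \<in> {0..pi/2}"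
    by (rule AE_uniform_measureI) auto
  have "AE z in K. fst z \<in> {0..pi/2}"
    using quarter unfolding distr_fst[symmetric] by (subst (asm) AE_distr_iff) auto
  moreover have "AE z in K. snd z \<in> {0..pi/2}"
    using quarter unfolding distr_snd[symmetric] by (subst (asm) AE_distr_iff) auto
  ultimately show ?thesis
    by (rule eventually_conj)
qed

lemma AE_symmetrize_same_signs:
  "AE z in symmetrize. cos (fst z) * cos (snd z) \<ge> 0 \<and> sin (fst z) * sin (snd z) \<ge> 0"
proof -
  let ?P = "measure_pmf (pmf_of_set {0, 1, 2, 3::nat})"
  have "AE z in distr (K \<Otimes>\<^sub>M ?P) K fst. fst z \<in> {0..pi/2} \<and> snd z \<in> {0..pi/2}"
    unfolding measure_pmf.distr_pair_fst by (rule AE_quarter)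
  then have "AE \<omega> in K \<Otimes>\<^sub>M ?P. fst (fst \<omega>) \<in> {0..pi/2} \<and> snd (fst \<omega>) \<in> {0..pi/2}"
    by (subst (asm) AE_distr_iff) auto
  then have "AE \<omega> in K \<Otimes>\<^sub>M ?P.
      0 \<le> cos (quadrant_map (snd \<omega>) (fst (fst \<omega>))) * cos (quadrant_map (snd \<omega>) (snd (fst \<omega>)))
      \<and> 0 \<le> sin (quadrant_map (snd \<omega>) (fst (fst \<omega>))) * sin (quadrant_map (snd \<omega>) (snd (fst \<omega>)))"
    by (rule eventually_mono)
      (auto simp: quadrant_map_trig intro!: mult_nonneg_nonneg cos_ge_zero sin_ge_zero)
  then show ?thesis
    unfolding symmetrize_def by (subst AE_distr_iff) (auto simp: split_beta')
qed

end

section \<open>The double angle transport on a quarter period\<close>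

lemma half_le_sin:
  fixes s :: real
  assumes "0 \<le> s" "s \<le> pi/2"
  shows "s / 2 \<le> sin s"
proof (cases "s \<le> pi/3")
  case True
  have "(\<lambda>t. sin t - t/2) 0 \<le> (\<lambda>t. sin t - t/2) s"
  proof (rule DERIV_nonneg_imp_nondecreasing[OF assms(1)])
    fix x assume x: "0 \<le> x" "x \<le> s"
    have "cos (pi/3) \<le> cos x"
      using x True by (intro cos_monotone_0_pi_le) auto
    then have "0 \<le> cos x - 1/2"
      by (simp add: cos_60)
    moreover have "DERIV (\<lambda>t. sin t - t/2) x :> cos x - 1/2"
      by (auto intro!: derivative_eq_intros)
    ultimately show "\<exists>y. DERIV (\<lambda>t. sin t - t/2) x :> y \<and> y \<ge> 0"
      by blast
  qed
  then show ?thesis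
    by simp
next
  case False
  have "sin (pi/3) \<le> sin s"
    using False assms by (intro sin_monotone_2pi_le) auto
  moreover have "1.72 \<le> sqrt 3"
    by (rule real_le_rsqrt) (simp add: power2_eq_square)
  ultimately show ?thesis
    using assms pi_approx by (simp add: sin_60)
qed

lemma sq_diff_le_cos_diff:
  fixes u v :: real
  assumes "0 \<le> u" "u \<le> pi" "0 \<le> v" "v \<le> pi"
  shows "(u - v)^2 \<le> 8 * \<bar>cos u - cos v\<bar>"
proof -
  have *: "(u - v)^2 \<le> 8 * (cos v - cos u)" if "0 \<le> v" "v \<le> u" "u \<le> pi" for u v :: real
  proof -
    define d where "d = u - v"
    have d: "0 \<le> d" "d \<le> pi"
      using that by (auto simp: d_def)
    have "d/4 \<le> sin (d/2)"
      using half_le_sin[of "d/2"] d by simp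
    moreover have "sin (d/2) \<le> sin ((v + u)/2)"
    proof (cases "(v + u)/2 \<le> pi/2")
      case True
      then show ?thesis
        using that d by (intro sin_monotone_2pi_le) (auto simp: d_def)
    next
      case False
      have "sin (d/2) \<le> sin (pi - (v + u)/2)"
        using that d False by (intro sin_monotone_2pi_le) (auto simp: d_def field_simps)
      then show ?thesis
        by simp
    qed
    ultimately have "(d/4) * (d/4) \<le> sin (d/2) * sin ((v + u)/2)"
      using d by (intro mult_mono) auto
    moreover have "cos v - cos u = 2 * sin ((v + u)/2) * sin (d/2)"
      unfolding d_def by (rule cos_diff_cos)
    ultimately show ?thesis
      by (simp add: d_def power2_eq_square algebra_simps)
  qed
  show ?thesis
  proof (cases "v \<le> u")
    case True
    then have "(u - v)^2 \<le> 8 * (cos v - cos u)"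
      using assms by (intro *) auto
    then show ?thesis
      by (smt (verit))
  next
    case False
    then have "(v - u)^2 \<le> 8 * (cos u - cos v)"
      using assms by (intro *) auto
    then show ?thesis
      by (smt (verit) power2_commute)
  qed
qed

text \<open>The library's \<open>arccos\<close> is unspecified outside \<open>[-1, 1]\<close>; clamping the argument makes it
  continuous, hence Borel measurable, on all of \<open>\<real>\<close>.\<close>

definition arccos_clamp :: "real \<Rightarrow> real" where
  "arccos_clamp t = arccos (max (-1) (min 1 t))"

lemma arccos_clamp_eq: "-1 \<le> t \<Longrightarrow> t \<le> 1 \<Longrightarrow> arccos_clamp t = arccos t"
  by (simp add: arccos_clamp_def)

lemma continuous_arccos_clamp: "continuous_on UNIV arccos_clamp"
  unfolding arccos_clamp_def
  by (intro continuous_on_compose2[OF continuous_on_arccos', of UNIV "\<lambda>t. max (-1) (min 1 t)"]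
      continuous_intros) auto

lemma borel_measurable_arccos_clamp[measurable]: "arccos_clamp \<in> borel_measurable borel"
  using continuous_arccos_clamp by (rule borel_measurable_continuous_onI)

lemma arccos_clamp_bounds: "0 \<le> arccos_clamp t \<and> arccos_clamp t \<le> pi"
  unfolding arccos_clamp_def by (rule arccos_bounded) auto

lemma DERIV_arccos_clamp:
  "-1 < t \<Longrightarrow> t < 1 \<Longrightarrow> DERIV arccos_clamp t :> inverse (- sqrt (1 - t\<^sup>2))"
  by (rule has_field_derivative_transform_within_open[OF DERIV_arccos, of _ "{-1<..<1}"])
    (auto simp: arccos_clamp_def)

locale double_angle_transport =
  fixes \<beta> \<gamma> \<delta> :: real
  assumes delta_pos: "0 < \<delta>" and delta_small: "\<delta> \<le> 1/256"
    and beta_close: "\<bar>\<beta> - 1\<bar> \<le> \<delta>" and gamma_small: "\<bar>\<gamma>\<bar> \<le> \<delta>"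
begin

text \<open>On \<open>[a, b]\<close> we have \<open>|cos (2 x)| \<le> 1 - 2 \<delta>\<close>, which keeps the target \<open>\<gamma> + \<beta> cos (2 x)\<close> of
  the transport strictly inside \<open>(-1, 1)\<close>.\<close>

definition "a = arcsin (sqrt \<delta>)"
definition "b = pi/2 - a"
definition "cos_target x = \<gamma> + \<beta> * cos (2 * x)"
definition "transport x = arccos_clamp (cos_target x) / 2"
definition "transport_deriv x = \<beta> * sin (2 * x) / sqrt (1 - (cos_target x)^2)"
definition "transport_inv y = arccos_clamp ((cos (2 * y) - \<gamma>) / \<beta>) / 2"
definition "follow_prob x = max 0 (min 1 (transport_deriv x)) * indicator {a..b} x"
definition "arrival_density y =
  max 0 (min 1 (1 / transport_deriv (transport_inv y))) * indicator {transport a..transport b} y"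
definition "contracting_set = {x \<in> {a..b}. transport_deriv x \<le> 1}"

lemma beta_bounds: "15/16 \<le> \<beta>" "\<beta> \<le> 17/16"
  using beta_close delta_small by auto

lemma sqrt_delta_bounds: "0 < sqrt \<delta>" "sqrt \<delta> \<le> 1/16"
proof -
  show "0 < sqrt \<delta>"
    using delta_pos by simp
  have "sqrt \<delta> \<le> sqrt (1/256)"
    using delta_small by (rule real_sqrt_le_mono)
  then show "sqrt \<delta> \<le> 1/16"
    by (simp add: real_sqrt_divide)
qed

lemma a_bounds: "0 < a" "a \<le> 2 * sqrt \<delta>" "cos (2 * a) = 1 - 2 * \<delta>" "a < b" "b < pi/2"
proof -
  have s1: "-1 \<le> sqrt \<delta>" "sqrt \<delta> \<le> 1"
    using sqrt_delta_bounds by linarith+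
  have p2: "2 * sqrt \<delta> \<le> pi/2"
    using sqrt_delta_bounds pi_ge_two by linarith
  have "sqrt \<delta> \<le> sin (2 * sqrt \<delta>)"
    using half_le_sin[of "2 * sqrt \<delta>"] sqrt_delta_bounds p2 by simp
  moreover have "arcsin (sqrt \<delta>) \<le> 2 * sqrt \<delta> \<longleftrightarrow> sqrt \<delta> \<le> sin (2 * sqrt \<delta>)"
    by (rule arcsin_le_iff; insert s1 p2 sqrt_delta_bounds pi_ge_two; linarith)
  ultimately show "a \<le> 2 * sqrt \<delta>"
    unfolding a_def by simp
  have "arcsin (sqrt \<delta>) \<le> 0 \<longleftrightarrow> sqrt \<delta> \<le> sin 0"
    by (rule arcsin_le_iff; insert s1 p2 sqrt_delta_bounds pi_ge_two; linarith)
  then show "0 < a"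
    unfolding a_def using sqrt_delta_bounds by (metis not_le sin_zero)
  have "sin a = sqrt \<delta>"
    unfolding a_def using s1 by simp
  then show "cos (2 * a) = 1 - 2 * \<delta>"
    using delta_pos by (simp add: cos_double_sin)
  show "a < b" "b < pi/2"
    unfolding b_def using \<open>0 < a\<close> \<open>a \<le> 2 * sqrt \<delta>\<close> sqrt_delta_bounds pi_gt3 by linarith+
qed

lemma interval_bounds: "x \<in> {a..b} \<Longrightarrow> 0 < x \<and> x < pi/2 \<and> 0 < 2 * x \<and> 2 * x < pi"
  using a_bounds by auto

lemma interval_subset_quarter: "{a..b} \<subseteq> {0..pi/2}"
  using a_bounds by auto

lemma abs_cos_double_le:
  assumes "x \<in> {a..b}"
  shows "\<bar>cos (2 * x)\<bar> \<le> 1 - 2 * \<delta>"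
proof -
  have "cos (2 * x) \<le> cos (2 * a)"
    using assms a_bounds by (intro cos_monotone_0_pi_le) auto
  moreover have "cos (2 * b) \<le> cos (2 * x)"
    using assms a_bounds by (intro cos_monotone_0_pi_le) auto
  moreover have "cos (2 * b) = - cos (2 * a)"
    unfolding b_def by (simp add: right_diff_distrib cos_diff)
  ultimately show ?thesis
    using a_bounds by auto
qed

lemma abs_cos_target_less_1:
  assumes "x \<in> {a..b}"
  shows "\<bar>cos_target x\<bar> < 1"
proof -
  have "\<bar>\<beta> * cos (2 * x)\<bar> \<le> (1 + \<delta>) * (1 - 2 * \<delta>)"
    unfolding abs_mult using abs_cos_double_le[OF assms] beta_close delta_small
    by (intro mult_mono) auto
  moreover have "\<bar>\<gamma> + \<beta> * cos (2 * x)\<bar> \<le> \<bar>\<gamma>\<bar> + \<bar>\<beta> * cos (2 * x)\<bar>"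
    by (rule abs_triangle_ineq)
  moreover have "0 < \<delta> * \<delta>"
    using delta_pos by simp
  ultimately show ?thesis
    unfolding cos_target_def using gamma_small by (simp add: algebra_simps)
qed

lemma borel_measurable_cos_target[measurable]: "cos_target \<in> borel_measurable borel"
  unfolding cos_target_def[abs_def] by measurable

lemma borel_measurable_transport[measurable]: "transport \<in> borel_measurable borel"
  unfolding transport_def[abs_def] by measurable

lemma borel_measurable_transport_deriv[measurable]: "transport_deriv \<in> borel_measurable borel"
  unfolding transport_deriv_def[abs_def] by measurable

lemma borel_measurable_transport_inv[measurable]: "transport_inv \<in> borel_measurable borel"
  unfolding transport_inv_def[abs_def] by measurable

lemma borel_measurable_follow_prob[measurable]: "follow_prob \<in> borel_measurable borel"
  unfolding follow_prob_def[abs_def] by measurable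

lemma borel_measurable_arrival_density[measurable]: "arrival_density \<in> borel_measurable borel"
  unfolding arrival_density_def[abs_def] by measurable

lemma follow_prob_bounds: "0 \<le> follow_prob x \<and> follow_prob x \<le> 1"
  by (simp add: follow_prob_def split: split_indicator)

lemma arrival_density_bounds: "0 \<le> arrival_density y \<and> arrival_density y \<le> 1"
  by (simp add: arrival_density_def split: split_indicator)

lemma transport_eq: "x \<in> {a..b} \<Longrightarrow> transport x = arccos (cos_target x) / 2"
  using abs_cos_target_less_1[of x] by (simp add: transport_def arccos_clamp_eq)

lemma transport_bounds: "0 \<le> transport x \<and> transport x \<le> pi/2"
  using arccos_clamp_bounds[of "cos_target x"] by (simp add: transport_def)

lemma cos_double_transport: "x \<in> {a..b} \<Longrightarrow> cos (2 * transport x) = cos_target x"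
  using abs_cos_target_less_1[of x] by (simp add: transport_eq)

lemma transport_displacement:
  assumes x: "x \<in> {a..b}"
  shows "\<bar>transport x - x\<bar> \<le> 2 * sqrt \<delta>"
proof -
  have "\<bar>cos (2 * transport x) - cos (2 * x)\<bar> = \<bar>\<gamma> + (\<beta> - 1) * cos (2 * x)\<bar>"
    using cos_double_transport[OF x] by (simp add: cos_target_def algebra_simps)
  also have "\<dots> \<le> \<bar>\<gamma>\<bar> + \<bar>\<beta> - 1\<bar> * \<bar>cos (2 * x)\<bar>"
    by (metis abs_mult abs_triangle_ineq)
  also have "\<dots> \<le> \<delta> + \<delta> * 1"
    using gamma_small beta_close by (intro add_mono mult_mono) auto
  finally have "(2 * transport x - 2 * x)^2 \<le> 16 * \<delta>"
    using sq_diff_le_cos_diff[of "2 * transport x" "2 * x"] transport_bounds[of x] interval_bounds[OF x]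
    by simp
  then have "sqrt ((2 * transport x - 2 * x)^2) \<le> sqrt (16 * \<delta>)"
    by (rule real_sqrt_le_mono)
  then show ?thesis
    by (simp add: real_sqrt_mult)
qed

lemma transport_mono:
  assumes "a \<le> x" "x \<le> y" "y \<le> b"
  shows "transport x \<le> transport y"
proof -
  have "cos (2 * y) \<le> cos (2 * x)"
    using assms interval_bounds[of x] interval_bounds[of y] by (intro cos_monotone_0_pi_le) auto
  then have "cos_target y \<le> cos_target x"
    unfolding cos_target_def using beta_bounds by simp
  then show ?thesis
    using abs_cos_target_less_1[of x] abs_cos_target_less_1[of y] assms
    by (simp add: transport_eq arccos_le_arccos)
qed

lemma sqrt_one_minus_cos_target_pos: "x \<in> {a..b} \<Longrightarrow> 0 < sqrt (1 - (cos_target x)^2)"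
  using abs_cos_target_less_1[of x] by (simp add: abs_square_less_1)

lemma transport_deriv_pos: "x \<in> {a..b} \<Longrightarrow> 0 < transport_deriv x"
  using sqrt_one_minus_cos_target_pos[of x] interval_bounds[of x] beta_bounds
  unfolding transport_deriv_def by (intro divide_pos_pos mult_pos_pos sin_gt_zero) auto

lemma has_real_derivative_transport:
  assumes x: "x \<in> {a..b}"
  shows "(transport has_real_derivative transport_deriv x) (at x)"
proof -
  have "DERIV arccos_clamp (cos_target x) :> inverse (- sqrt (1 - (cos_target x)\<^sup>2))"
    using abs_cos_target_less_1[OF x] by (intro DERIV_arccos_clamp) auto
  moreover have "(cos_target has_real_derivative (- 2 * \<beta> * sin (2 * x))) (at x)"
    unfolding cos_target_def[abs_def] by (auto intro!: derivative_eq_intros)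
  ultimately have "((\<lambda>x. arccos_clamp (cos_target x)) has_real_derivative
      inverse (- sqrt (1 - (cos_target x)\<^sup>2)) * (- 2 * \<beta> * sin (2 * x))) (at x)"
    by (rule DERIV_chain2)
  then have "((\<lambda>x. arccos_clamp (cos_target x) / 2) has_real_derivative
      inverse (- sqrt (1 - (cos_target x)\<^sup>2)) * (- 2 * \<beta> * sin (2 * x)) / 2) (at x)"
    by (rule DERIV_cdivide)
  moreover have
    "inverse (- sqrt (1 - (cos_target x)\<^sup>2)) * (- 2 * \<beta> * sin (2 * x)) / 2 = transport_deriv x"
    using sqrt_one_minus_cos_target_pos[OF x] unfolding transport_deriv_def by (simp add: field_simps)
  ultimately show ?thesis
    unfolding transport_def[abs_def] by simp
qed

lemma continuous_on_transport_deriv: "continuous_on {a..b} transport_deriv"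
proof -
  have "\<And>x. x \<in> {a..b} \<Longrightarrow> sqrt (1 - (\<gamma> + \<beta> * cos (2 * x))\<^sup>2) \<noteq> 0"
    using sqrt_one_minus_cos_target_pos unfolding cos_target_def by fastforce
  then show ?thesis
    unfolding transport_deriv_def cos_target_def[abs_def] by (intro continuous_intros) auto
qed

lemma transport_inv_transport:
  assumes x: "x \<in> {a..b}"
  shows "transport_inv (transport x) = x"
proof -
  have "(cos (2 * transport x) - \<gamma>) / \<beta> = cos (2 * x)"
    using cos_double_transport[OF x] beta_bounds by (simp add: cos_target_def)
  then show ?thesis
    using interval_bounds[OF x] by (simp add: transport_inv_def arccos_clamp_eq arccos_cos)
qed

lemma transport_deriv_le_1_iff:
  assumes x: "x \<in> {a..b}"
  shows "transport_deriv x \<le> 1 \<longleftrightarrow> \<beta>^2 - 1 + \<gamma>^2 + 2 * \<gamma> * \<beta> * cos (2 * x) \<le> 0"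
proof -
  have "0 \<le> \<beta> * sin (2 * x)"
    using interval_bounds[OF x] beta_bounds by (simp add: sin_ge_zero)
  then have "transport_deriv x \<le> 1 \<longleftrightarrow> sqrt ((\<beta> * sin (2 * x))^2) \<le> sqrt (1 - (cos_target x)^2)"
    using sqrt_one_minus_cos_target_pos[OF x] by (simp add: transport_deriv_def divide_le_eq_1_pos)
  also have "\<dots> \<longleftrightarrow> \<beta>^2 * (1 - (cos (2 * x))^2) \<le> 1 - (cos_target x)^2"
    by (simp add: power_mult_distrib sin_squared_eq)
  also have "\<dots> \<longleftrightarrow> \<beta>^2 - 1 + \<gamma>^2 + 2 * \<gamma> * \<beta> * cos (2 * x) \<le> 0"
    unfolding cos_target_def by (simp add: power2_eq_square algebra_simps)
  finally show ?thesis .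
qed

text \<open>By the previous lemma, the condition \<open>transport_deriv x \<le> 1\<close> is affine in \<open>cos (2 x)\<close>, which
  is monotone on \<open>[a, b]\<close>.\<close>

lemma contracting_set_convex:
  assumes "x \<in> contracting_set" "x' \<in> contracting_set" "x \<le> y" "y \<le> x'"
  shows "y \<in> contracting_set"
proof -
  have xs: "x \<in> {a..b}" "x' \<in> {a..b}" "y \<in> {a..b}"
    using assms by (auto simp: contracting_set_def)
  define K0 where "K0 = \<beta>^2 - 1 + \<gamma>^2"
  define K1 where "K1 = 2 * \<gamma> * \<beta>"
  have "K0 + K1 * cos (2 * x) \<le> 0" "K0 + K1 * cos (2 * x') \<le> 0"
    using assms(1,2) xs transport_deriv_le_1_iff
    unfolding contracting_set_def K0_def K1_def by (auto simp: algebra_simps)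
  moreover have "cos (2 * y) \<le> cos (2 * x)" "cos (2 * x') \<le> cos (2 * y)"
    using assms interval_bounds[OF xs(1)] interval_bounds[OF xs(2)] interval_bounds[OF xs(3)]
    by (auto intro!: cos_monotone_0_pi_le)
  ultimately have "K0 + K1 * cos (2 * y) \<le> 0"
  proof (cases "0 \<le> K1")
    case True
    then have "K1 * cos (2 * y) \<le> K1 * cos (2 * x)"
      using \<open>cos (2 * y) \<le> cos (2 * x)\<close> by (intro mult_left_mono)
    then show ?thesis
      using \<open>K0 + K1 * cos (2 * x) \<le> 0\<close> by linarith
  next
    case False
    then have "K1 * cos (2 * y) \<le> K1 * cos (2 * x')"
      using \<open>cos (2 * x') \<le> cos (2 * y)\<close> by (intro mult_left_mono_neg) auto
    then show ?thesis
      using \<open>K0 + K1 * cos (2 * x') \<le> 0\<close> by linarith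
  qed
  then show ?thesis
    using xs transport_deriv_le_1_iff[of y]
    unfolding contracting_set_def K0_def K1_def by (auto simp: algebra_simps)
qed

lemma closed_contracting_set: "closed contracting_set"
proof -
  have "contracting_set = {a..b} \<inter> transport_deriv -` {..1}"
    by (auto simp: contracting_set_def)
  then show ?thesis
    using continuous_closed_preimage[OF continuous_on_transport_deriv] by auto
qed

lemma contracting_set_interval:
  assumes "contracting_set \<noteq> {}"
  obtains e1 e2 where "a \<le> e1" "e1 \<le> e2" "e2 \<le> b" "contracting_set = {e1..e2}"
proof -
  have bdd: "bdd_below contracting_set" "bdd_above contracting_set"
    by (auto simp: contracting_set_def bdd_below_def bdd_above_def)
  define e1 where "e1 = Inf contracting_set"
  define e2 where "e2 = Sup contracting_set"
  have e1: "e1 \<in> contracting_set"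
    unfolding e1_def by (rule closed_contains_Inf[OF assms bdd(1) closed_contracting_set])
  have e2: "e2 \<in> contracting_set"
    unfolding e2_def by (rule closed_contains_Sup[OF assms bdd(2) closed_contracting_set])
  have sub: "contracting_set \<subseteq> {e1..e2}"
    unfolding e1_def e2_def using bdd by (auto intro: cInf_lower cSup_upper)
  show ?thesis
  proof (rule that)
    show "contracting_set = {e1..e2}"
      using sub contracting_set_convex[OF e1 e2] by auto
    show "a \<le> e1" "e2 \<le> b"
      using e1 e2 by (auto simp: contracting_set_def)
    show "e1 \<le> e2"
      using e1 sub by auto
  qed
qed

lemma nn_integral_transport_deriv:
  assumes e: "a \<le> e1" "e1 \<le> e2" "e2 \<le> b"
  shows "(\<integral>\<^sup>+x. ennreal (transport_deriv x * indicator {e1..e2} x) \<partial>lborel)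
    = ennreal (transport e2 - transport e1)"
proof -
  have "(\<integral>\<^sup>+x. ennreal (1 * indicator {transport e1..transport e2} x) \<partial>lborel)
      = (\<integral>\<^sup>+x. ennreal (1 * transport_deriv x * indicator {e1..e2} x) \<partial>lborel)"
  proof (rule nn_integral_substitution[where f="\<lambda>_. 1"])
    show "\<And>x. x \<in> {e1..e2} \<Longrightarrow> (transport has_real_derivative transport_deriv x) (at x)"
      using e by (intro has_real_derivative_transport) auto
    show "continuous_on {e1..e2} transport_deriv"
      using e by (intro continuous_on_subset[OF continuous_on_transport_deriv]) auto
    show "\<And>x. x \<in> {e1..e2} \<Longrightarrow> 0 \<le> transport_deriv x"
      using e transport_deriv_pos by (auto intro: less_imp_le)
    show "set_borel_measurable borel {transport e1..transport e2} (\<lambda>_. 1::real)"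
      unfolding set_borel_measurable_def by measurable
  qed (use e in auto)
  then show ?thesis
    using transport_mono[OF e] by (simp add: ennreal_indicator)
qed

lemma follow_prob_split:
  assumes e: "a \<le> e1" "e1 \<le> e2" "e2 \<le> b" and contracting: "contracting_set = {e1..e2}"
  shows "ennreal (follow_prob x)
    = indicator {a..<e1} x + indicator {e2<..b} x + ennreal (transport_deriv x * indicator {e1..e2} x)"
proof -
  have deriv: "transport_deriv x \<le> 1 \<longleftrightarrow> x \<in> {e1..e2}" if "x \<in> {a..b}"
    using that contracting[symmetric] by (simp add: contracting_set_def)
  consider "x \<notin> {a..b}" | "x \<in> {a..<e1} \<union> {e2<..b}" | "x \<in> {e1..e2}"
    using e by force
  then show ?thesis
  proof cases
    case 1
    then have "follow_prob x = 0" "x \<notin> {a..<e1}" "x \<notin> {e2<..b}" "x \<notin> {e1..e2}"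
      using e by (auto simp: follow_prob_def)
    then show ?thesis
      by simp
  next
    case 2
    then have "follow_prob x = 1" "x \<notin> {e1..e2}"
      using e deriv by (auto simp: follow_prob_def)
    then show ?thesis
      using 2 e by (auto simp: indicator_def)
  next
    case 3
    then have "follow_prob x = transport_deriv x" "x \<notin> {a..<e1}" "x \<notin> {e2<..b}"
      using e deriv transport_deriv_pos[of x] by (auto simp: follow_prob_def)
    then show ?thesis
      using 3 by simp
  qed
qed

text \<open>Where the transport does not contract, the follow probability is \<open>1\<close>; on the remaining
  interval its integral is the length of the image interval, which is almost as long because the
  transport moves points by at most \<open>2 \<surd>\<delta>\<close>.\<close>

lemma nn_integral_follow_prob_lborel_ge:
  "ennreal (b - a - 4 * sqrt \<delta>) \<le> (\<integral>\<^sup>+x. ennreal (follow_prob x) \<partial>lborel)"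
proof (cases "contracting_set = {}")
  case True
  then have "(\<integral>\<^sup>+x. ennreal (follow_prob x) \<partial>lborel) = (\<integral>\<^sup>+x. indicator {a..b} x \<partial>lborel)"
    by (intro nn_integral_cong) (auto simp: follow_prob_def contracting_set_def split: split_indicator)
  then show ?thesis
    using a_bounds sqrt_delta_bounds by (simp add: ennreal_leI)
next
  case False
  obtain e1 e2 where e: "a \<le> e1" "e1 \<le> e2" "e2 \<le> b" and contracting: "contracting_set = {e1..e2}"
    using contracting_set_interval[OF False] by blast
  have "(\<integral>\<^sup>+x. ennreal (follow_prob x) \<partial>lborel)
      = emeasure lborel {a..<e1} + emeasure lborel {e2<..b} + ennreal (transport e2 - transport e1)"
    by (simp add: follow_prob_split[OF e contracting] nn_integral_add nn_integral_transport_deriv[OF e])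
  also have "\<dots> = ennreal ((e1 - a) + (b - e2) + (transport e2 - transport e1))"
    using e transport_mono[OF e] by (simp add: ennreal_plus)
  finally show ?thesis
    using transport_displacement[of e1] transport_displacement[of e2] e by (simp add: ennreal_leI)
qed

lemma follow_prob_eq_arrival_density:
  assumes x: "x \<in> {a..b}"
  shows "follow_prob x = arrival_density (transport x) * transport_deriv x"
proof -
  have "transport x \<in> {transport a..transport b}"
    using x by (auto intro: transport_mono)
  moreover have "max 0 (min 1 (1 / transport_deriv x)) * transport_deriv x
      = max 0 (min 1 (transport_deriv x))"
    using transport_deriv_pos[OF x]
    by (cases "transport_deriv x \<le> 1") (auto simp: min_def max_def field_simps)
  ultimately show ?thesis
    using x by (simp add: follow_prob_def arrival_density_def transport_inv_transport)
qed

lemma nn_integral_follow_transport_lborel: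
  assumes [measurable]: "Y \<in> sets borel"
  shows "(\<integral>\<^sup>+x. ennreal (follow_prob x) * indicator Y (transport x) * indicator {0..pi/2} x \<partial>lborel)
    = (\<integral>\<^sup>+y. ennreal (arrival_density y) * indicator Y y * indicator {0..pi/2} y \<partial>lborel)"
proof -
  have image_subset: "{transport a..transport b} \<subseteq> {0..pi/2}"
    using transport_bounds[of a] transport_bounds[of b] by auto
  have "(\<integral>\<^sup>+x. ennreal (follow_prob x) * indicator Y (transport x) * indicator {0..pi/2} x \<partial>lborel)
      = (\<integral>\<^sup>+x. ennreal (arrival_density (transport x) * indicator Y (transport x) * transport_deriv x
          * indicator {a..b} x) \<partial>lborel)"
  proof (intro nn_integral_cong)
    fix x
    show "ennreal (follow_prob x) * indicator Y (transport x) * indicator {0..pi/2} x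
        = ennreal (arrival_density (transport x) * indicator Y (transport x) * transport_deriv x
          * indicator {a..b} x)"
    proof (cases "x \<in> {a..b}")
      case True
      then show ?thesis
        using interval_subset_quarter
        by (auto simp: follow_prob_eq_arrival_density mult_ac split: split_indicator)
    qed (simp add: follow_prob_def)
  qed
  also have "\<dots> = (\<integral>\<^sup>+y. ennreal (arrival_density y * indicator Y y
      * indicator {transport a..transport b} y) \<partial>lborel)"
  proof (rule nn_integral_substitution[symmetric])
    show "\<And>x. x \<in> {a..b} \<Longrightarrow> 0 \<le> transport_deriv x"
      using transport_deriv_pos by (auto intro: less_imp_le)
    show "set_borel_measurable borel {transport a..transport b} (\<lambda>y. arrival_density y * indicator Y y)"
      unfolding set_borel_measurable_def by measurable
  qed (use a_bounds has_real_derivative_transport continuous_on_transport_deriv in auto)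
  also have "\<dots> = (\<integral>\<^sup>+y. ennreal (arrival_density y) * indicator Y y * indicator {0..pi/2} y \<partial>lborel)"
    using image_subset
    by (intro nn_integral_cong) (auto simp: arrival_density_def split: split_indicator)
  finally show ?thesis .
qed

lemma pushforward_follow_prob:
  assumes [measurable]: "Y \<in> sets borel"
  shows "(\<integral>\<^sup>+x. ennreal (follow_prob x) * indicator Y (transport x) \<partial>quarter_uniform)
    = (\<integral>\<^sup>+y. ennreal (arrival_density y) * indicator Y y \<partial>quarter_uniform)"
  by (simp add: nn_integral_uniform_measure nn_integral_follow_transport_lborel)

lemma nn_integral_follow_prob_ge:
  "ennreal (1 - 6 * sqrt \<delta>) \<le> (\<integral>\<^sup>+x. ennreal (follow_prob x) \<partial>quarter_uniform)"
proof -
  have "(pi/2) * (1 - 6 * sqrt \<delta>) \<le> pi/2 - 8 * sqrt \<delta>"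
    using pi_gt3 sqrt_delta_bounds by (simp add: algebra_simps)
  also have "\<dots> \<le> b - a - 4 * sqrt \<delta>"
    using a_bounds unfolding b_def by linarith
  finally have length_ge: "1 - 6 * sqrt \<delta> \<le> (b - a - 4 * sqrt \<delta>) / (pi/2)"
    by (simp add: field_simps)
  have "0 \<le> b - a - 4 * sqrt \<delta>"
    using a_bounds sqrt_delta_bounds pi_gt3 unfolding b_def by linarith
  then have "ennreal (1 - 6 * sqrt \<delta>) \<le> ennreal (b - a - 4 * sqrt \<delta>) / ennreal (pi/2)"
    using length_ge by (simp add: divide_ennreal ennreal_leI)
  also have "\<dots> \<le> (\<integral>\<^sup>+x. ennreal (follow_prob x) \<partial>lborel) / ennreal (pi/2)"
    by (intro divide_right_mono_ennreal nn_integral_follow_prob_lborel_ge)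
  also have "(\<integral>\<^sup>+x. ennreal (follow_prob x) \<partial>lborel)
      = (\<integral>\<^sup>+x. ennreal (follow_prob x) * indicator {0..pi/2} x \<partial>lborel)"
    using interval_subset_quarter
    by (intro nn_integral_cong) (auto simp: follow_prob_def split: split_indicator)
  also have "\<dots> / ennreal (pi/2) = (\<integral>\<^sup>+x. ennreal (follow_prob x) \<partial>quarter_uniform)"
    by (simp add: nn_integral_uniform_measure)
  finally show ?thesis .
qed

sublocale partial_transport quarter_uniform follow_prob arrival_density transport
  by (intro partial_transport.intro partial_transport_axioms.intro prob_space_uniform_measure)
    (auto simp: measurable_cong_sets[OF _ sets_uniform_measure] follow_prob_bounds
      arrival_density_bounds pushforward_follow_prob)

lemma quarter_coupling_coupling: "quarter_coupling coupling"
proof -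
  have sets_eq: "sets (quarter_uniform \<Otimes>\<^sub>M quarter_uniform) = sets (borel \<Otimes>\<^sub>M borel)"
    by (intro sets_pair_measure_cong) simp_all
  have "distr coupling borel fst = quarter_uniform" "distr coupling borel snd = quarter_uniform"
    using distr_coupling_fst distr_coupling_snd by (simp_all cong: distr_cong)
  then show ?thesis
    using prob_space_coupling sets_coupling sets_eq
    by (simp add: quarter_coupling_def quarter_coupling_axioms_def)
qed

lemma measure_coupling_ge:
  assumes X: "X \<in> sets (borel \<Otimes>\<^sub>M borel)" and graph: "\<And>x. x \<in> {a..b} \<Longrightarrow> (x, transport x) \<in> X"
  shows "1 - 6 * sqrt \<delta> \<le> measure coupling X"
proof -
  interpret coupling: prob_space coupling
    by (rule prob_space_coupling)
  have "X \<in> sets (quarter_uniform \<Otimes>\<^sub>M quarter_uniform)"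
    using X by (simp cong: sets_pair_measure_cong)
  have "ennreal (1 - 6 * sqrt \<delta>) \<le> (\<integral>\<^sup>+x. ennreal (follow_prob x) \<partial>quarter_uniform)"
    by (rule nn_integral_follow_prob_ge)
  also have "\<dots> = (\<integral>\<^sup>+x. ennreal (follow_prob x) * indicator X (x, transport x) \<partial>quarter_uniform)"
    using graph by (intro nn_integral_cong) (simp add: follow_prob_def split: split_indicator)
  also have "\<dots> \<le> emeasure coupling X"
    by (rule emeasure_coupling_ge) fact
  also have "\<dots> = ennreal (measure coupling X)"
    by (rule coupling.emeasure_eq_measure)
  finally show ?thesis
    using measure_nonneg[of coupling X] by (auto simp: ennreal_le_iff2)
qed

end

section \<open>Choice of the parameters\<close>

lemma divide_le_powr_diff:
  fixes N p q X D :: real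
  assumes "0 < N" and "X \<le> N powr (- q)" and "N powr (- p) \<le> D"
  shows "X / D \<le> N powr (p - q)"
proof -
  have pos: "0 < N powr (- p)" "0 < D"
    using assms(1,3) powr_gt_zero[of N "- p"] by linarith+
  have "X / D \<le> N powr (- q) / D"
    using assms(2) pos by (intro divide_right_mono) auto
  also have "\<dots> \<le> N powr (- q) / N powr (- p)"
    using assms(3) pos by (intro divide_left_mono) auto
  finally show ?thesis
    by (simp add: powr_diff[symmetric])
qed

lemma double_angle_transport_of_close_coefficients:
  fixes N p q A B C D :: real
  assumes "1 \<le> q - p" and N: "768 < N"
    and AC: "\<bar>A - C\<bar> \<le> N powr (- q)" and BD: "\<bar>B - D\<bar> \<le> N powr (- q)" and D: "N powr (- p) \<le> D"
  shows "double_angle_transport (B / D) (2 * (A - C) / D + B / D - 1) (3 * N powr (p - q))"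
proof
  have D_pos: "0 < D"
    using D N by (smt (verit) powr_gt_zero)
  have "\<bar>B / D - 1\<bar> = \<bar>B - D\<bar> / D"
    using D_pos by (simp add: field_simps abs_divide)
  also have "\<dots> \<le> N powr (p - q)"
    using N BD D by (intro divide_le_powr_diff) auto
  finally have beta: "\<bar>B / D - 1\<bar> \<le> N powr (p - q)" .
  have "\<bar>2 * (A - C) / D\<bar> = 2 * (\<bar>A - C\<bar> / D)"
    by (simp only: abs_divide abs_mult abs_numeral abs_of_pos[OF D_pos] times_divide_eq_right)
  also have "\<dots> \<le> 2 * N powr (p - q)"
    using N AC D divide_le_powr_diff[of N "\<bar>A - C\<bar>" q p D] by simp
  finally show "\<bar>2 * (A - C) / D + B / D - 1\<bar> \<le> 3 * N powr (p - q)"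
    using beta by linarith
  show "\<bar>B / D - 1\<bar> \<le> 3 * N powr (p - q)"
    using beta by simp
  show "0 < 3 * N powr (p - q)"
    using N by simp
  have "768 < N powr (q - p)"
    using N assms(1) powr_mono[of 1 "q - p" N] by simp
  then have "N powr (p - q) < 1 / 768"
    using powr_minus_divide[of N "q - p"] by (simp add: divide_less_eq)
  then show "3 * N powr (p - q) \<le> 1 / 256"
    by simp
qed

lemma six_sqrt_le_powr:
  fixes N c p q :: real
  assumes "1 \<le> N" and "c \<le> (q - p) / 2"
  shows "6 * sqrt (3 * N powr (p - q)) \<le> 6000 * N powr (- c)"
proof -
  have "sqrt (3 * N powr (p - q)) = sqrt 3 * N powr ((p - q) / 2)"
    using assms(1) by (simp add: real_sqrt_mult powr_half_sqrt[symmetric] powr_powr)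
  also have "\<dots> \<le> 2 * N powr (- c)"
  proof (rule mult_mono)
    show "sqrt 3 \<le> (2::real)"
      by (rule real_le_lsqrt) auto
    show "N powr ((p - q) / 2) \<le> N powr (- c)"
      using assms by (intro powr_mono) auto
  qed auto
  finally show ?thesis
    using powr_ge_zero[of N "- c"] by linarith
qed

lemma cos_sq_eq_of_cos_double:
  fixes A B C D x y :: real
  assumes "D \<noteq> 0" and "cos (2 * y) = (2 * (A - C) / D + B / D - 1) + B / D * cos (2 * x)"
  shows "A + B * (cos x)^2 = C + D * (cos y)^2"
proof -
  have "D * (2 * (cos y)^2 - 1) = 2 * (A - C) + B - D + B * (2 * (cos x)^2 - 1)"
    using assms by (simp add: cos_double_cos[symmetric] field_simps)
  then show ?thesis
    by (simp add: algebra_simps)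
qed

lemma exists_circle_coupling_cos_sq:
  fixes A B C D \<delta> :: real
  assumes "double_angle_transport (B / D) (2 * (A - C) / D + B / D - 1) \<delta>" and D: "D \<noteq> 0"
  shows "\<exists>M. prob_space M \<and> sets M = sets (borel \<Otimes>\<^sub>M borel)
      \<and> distr M borel fst = circle_uniform \<and> distr M borel snd = circle_uniform
      \<and> 1 - 6 * sqrt \<delta> \<le> measure M {z \<in> space M. A + B * (cos (fst z))^2 = C + D * (cos (snd z))^2}
      \<and> (AE z in M. cos (fst z) * cos (snd z) \<ge> 0 \<and> sin (fst z) * sin (snd z) \<ge> 0)"
proof -
  interpret T: double_angle_transport "B / D" "2 * (A - C) / D + B / D - 1" \<delta>
    by (rule assms(1))
  interpret K: quarter_coupling T.coupling
    by (rule T.quarter_coupling_coupling)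
  define E where "E = {z :: real \<times> real. A + B * (cos (fst z))^2 = C + D * (cos (snd z))^2}"
  have "E = {z \<in> space (borel \<Otimes>\<^sub>M borel). A + B * (cos (fst z))^2 = C + D * (cos (snd z))^2}"
    by (simp add: E_def space_pair_measure)
  then have E_sets: "E \<in> sets (borel \<Otimes>\<^sub>M borel)"
    by simp
  have "(x, T.transport x) \<in> E" if "x \<in> {T.a..T.b}" for x
    using cos_sq_eq_of_cos_double[OF D T.cos_double_transport[OF that, unfolded T.cos_target_def]]
    by (simp add: E_def)
  then have "1 - 6 * sqrt \<delta> \<le> measure T.coupling E"
    using E_sets by (rule T.measure_coupling_ge[rotated])
  also have "\<dots> = measure K.symmetrize E"
    using K.emeasure_symmetrize_invariant[OF E_sets] by (simp add: measure_def E_def quadrant_map_trig)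
  also have "E = {z \<in> space K.symmetrize. A + B * (cos (fst z))^2 = C + D * (cos (snd z))^2}"
    unfolding K.space_symmetrize E_def by simp
  finally show ?thesis
    by (intro exI[of _ K.symmetrize] conjI K.prob_space_symmetrize K.sets_symmetrize
        K.distr_symmetrize_fst K.distr_symmetrize_snd K.AE_symmetrize_same_signs)
qed

theorem lemma4p6:
  fixes p q q' :: real
  assumes "1 < p" and "p < q'" and "q' < q / 2"
  shows "\<exists>N0::real. \<forall>n::nat. real n > N0 \<longrightarrow>
    (\<forall>A B C D :: real.
       0 \<le> A \<and> A \<le> 1 \<and> 0 \<le> B \<and> B \<le> 1 \<and>
       0 \<le> C \<and> C \<le> 1 \<and> 0 \<le> D \<and> D \<le> 1 \<and>
       \<bar>A - C\<bar> \<le> real n powr (- q) \<and> \<bar>B - D\<bar> \<le> real n powr (- q) \<and>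
       B \<ge> real n powr (- p) \<and> D \<ge> real n powr (- p)
     \<longrightarrow>
     (\<exists>M :: (real \<times> real) measure.
        prob_space M \<and>
        sets M = sets (borel \<Otimes>\<^sub>M borel) \<and>
        distr M borel fst = uniform_measure lborel {0..<2*pi} \<and>
        distr M borel snd = uniform_measure lborel {0..<2*pi} \<and>
        measure M {z \<in> space M. A + B * (cos (fst z))^2 = C + D * (cos (snd z))^2}
          \<ge> 1 - 6000 * real n powr (- min (q' / 2) (q - 2 * q')) \<and>
        (AE z in M. cos (fst z) * cos (snd z) \<ge> 0 \<and> sin (fst z) * sin (snd z) \<ge> 0)))"
proof (intro exI[of _ 768] allI impI)
  fix n :: nat and A B C D :: real
  assume n: "768 < real n" and H: "0 \<le> A \<and> A \<le> 1 \<and> 0 \<le> B \<and> B \<le> 1 \<and>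
       0 \<le> C \<and> C \<le> 1 \<and> 0 \<le> D \<and> D \<le> 1 \<and>
       \<bar>A - C\<bar> \<le> real n powr (- q) \<and> \<bar>B - D\<bar> \<le> real n powr (- q) \<and>
       B \<ge> real n powr (- p) \<and> D \<ge> real n powr (- p)"
  have "double_angle_transport (B / D) (2 * (A - C) / D + B / D - 1) (3 * real n powr (p - q))"
    using H n assms by (intro double_angle_transport_of_close_coefficients) auto
  moreover have "D \<noteq> 0"
    using H powr_gt_zero[of "real n" "- p"] n by auto
  ultimately obtain M where M: "prob_space M" "sets M = sets (borel \<Otimes>\<^sub>M borel)"
      "distr M borel fst = circle_uniform" "distr M borel snd = circle_uniform"
      "1 - 6 * sqrt (3 * real n powr (p - q))
        \<le> measure M {z \<in> space M. A + B * (cos (fst z))^2 = C + D * (cos (snd z))^2}"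
      "AE z in M. cos (fst z) * cos (snd z) \<ge> 0 \<and> sin (fst z) * sin (snd z) \<ge> 0"
    by (blast dest: exists_circle_coupling_cos_sq)
  moreover have "6 * sqrt (3 * real n powr (p - q)) \<le> 6000 * real n powr (- min (q' / 2) (q - 2 * q'))"
    using n assms by (intro six_sqrt_le_powr) (auto simp: min_def)
  ultimately show "\<exists>M. prob_space M \<and> sets M = sets (borel \<Otimes>\<^sub>M borel)
      \<and> distr M borel fst = circle_uniform \<and> distr M borel snd = circle_uniform
      \<and> measure M {z \<in> space M. A + B * (cos (fst z))^2 = C + D * (cos (snd z))^2}
          \<ge> 1 - 6000 * real n powr (- min (q' / 2) (q - 2 * q'))
      \<and> (AE z in M. cos (fst z) * cos (snd z) \<ge> 0 \<and> sin (fst z) * sin (snd z) \<ge> 0)"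
    by (intro exI[of _ M] conjI) auto
qed

end
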